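(* For any two systems $\mathfrak T_1$ and $\mathfrak T_2$, if $\mathfrak T_1\sim_{hpb}\mathfrak T_2$ then $\mathfrak T_1\sim_{\mathrm{c}\mu}\mathfrak T_2$.
   Context: A system (transition system with independence) is $\mathfrak T=(S,s_0,T,I,\Sigma)$: $S$ states, $s_0\in S$, $\Sigma$ labels, $T\subseteq S\times\Sigma\times S$, $I\subseteq T\times T$ irreflexive symmetric; for $t=(s,a,s')$, $\sigma(t)=s,\tau(t)=s',\delta(t)=a$. With $(s,a,s_1)\prec(s_2,a,q)$ iff $\exists b$: $(s,a,s_1)I(s,b,s_2)$, $(s,a,s_1)I(s_1,b,q)$, $(s,b,s_2)I(s_2,a,q)$, and $\sim$ the equivalence closure of $\prec$, the axioms are: (A1) $(s,a,s_1)\sim(s,a,s_2)\Rightarrow s_1=s_2$; (A2) $(s,a,s_1)I(s,b,s_2)\Rightarrow\exists q.\,(s,a,s_1)I(s_1,b,q)\wedge(s,b,s_2)I(s_2,a,q)$; (A3) $(s,a,s_1)I(s_1,b,q)\Rightarrow\exists s_2.\,(s,a,s_1)I(s,b,s_2)\wedge(s,b,s_2)I(s_2,a,q)$; (A4) $t\sim t'\Rightarrow\{u:tIu\}=\{u:t'Iu\}$. Systems are image-finite. Relations: $t\otimes t'$ iff $\sigma(t)=\sigma(t')\wedge tIt'$; $t\ominus t'$ iff $\tau(t)=\sigma(t')\wedge tIt'$; $t\le t'$ iff $\tau(t)=\sigma(t')\wedge\neg tIt'$. $\mathfrak X(s)$ = transitions with source $s$; a conflict-free set is a set of transitions with common source,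 pairwise $\otimes$; support sets are the $\mathfrak X(s)$ and the non-empty conflict-free sets; $M\sqsubseteq R$ iff $M\subseteq R$ and no $t\in R\setminus M$ has $t\otimes t'$ for all $t'\in M$; $\mathcal X$ = all $\mathfrak X(s)$ and all support sets $M\sqsubseteq\mathfrak X(s)$. $\mathfrak A=T\cup\{t_\epsilon\}$ with fresh $t_\epsilon$, $\tau(t_\epsilon)=s_0$, $t_\epsilon\le t$ whenever $\sigma(t)=s_0$, never $t_\epsilon\ominus t$. Processes: $\mathfrak S=\mathcal X\times\mathfrak A$; initial process $(\mathfrak X(s_0),t_\epsilon)$. $\sim_{\mathrm{c}\mu}$: systems are equivalent iff their initial processes satisfy the same closed fixpoint-free formulas $\phi::=\mathrm{tt}\mid\neg\phi\mid\phi\wedge\phi\mid\langle a\rangle_c\phi\mid\langle a\rangle_{nc}\phi$, with $[\![\mathrm{tt}]\!]=\mathfrak S$, complement, intersection, $[\![\langle a\rangle_c\phi]\!]=\{(R,t):\exists r\in R.\ \delta(r)=a,\ t\le r,\ (\mathfrak X(\tau(r)),r)\in[\![\phi]\!]\}$, and $\langle a\rangle_{nc}$ likewise with $t\ominus r$. $\sim_{hpb}$: runs are finite sequences $[t_1,\dots,t_k]$ with $\sigma(t_1)=s_0$, $\sigma(t_{i+1})=\tau(t_i)$; $\varrho(\pi)$ is the last transition (empty run $\epsilon$ ends at $s_0$ and its "last transition" is independent of nothing). The labelled poset of a run: elements $1..k$ labelled $\delta(t_i)$, order the reflexive-transitive closure of $\{(i,j):i<j,\neg t_iIt_j\}$.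 $(\pi_1.u,\pi_2.v)$ is synchronous iff $(\varrho(\pi_1),u)\in I_1\Leftrightarrow(\varrho(\pi_2),v)\in I_2$ and the labelled posets of $\pi_1.u,\pi_2.v$ are isomorphic. hpb game from $(\epsilon,\epsilon)$: Adam picks a system and a transition $u$ from the end state of the current run there; Eve answers with an equally labelled transition $v$ from the end state of the current run in the other system so that the extended pair is synchronous; a player who cannot move loses, infinite plays are won by Eve. $\mathfrak T_1\sim_{hpb}\mathfrak T_2$ iff Eve has a winning strategy. *)

theory Defs
  imports Main
begin

type_synonym ('s,'a) trans = "'s \<times> 'a \<times> 's"

record ('s,'a) tsi =
  states :: "'s set"
  init   :: 's
  trans  :: "('s,'a) trans set"
  indep  :: "(('s,'a) trans \<times> ('s,'a) trans) set"
  labels :: "'a set"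

definition src :: "('s,'a) trans \<Rightarrow> 's" where "src t = fst t"
definition lab :: "('s,'a) trans \<Rightarrow> 'a" where "lab t = fst (snd t)"
definition tgt :: "('s,'a) trans \<Rightarrow> 's" where "tgt t = snd (snd t)"

definition prec :: "('s,'a,'x) tsi_scheme \<Rightarrow> (('s,'a) trans \<times> ('s,'a) trans) set" where
  "prec M = {((s,a,s1),(s2,a',q)) | s a s1 s2 a' q. a' = a \<and>
      (\<exists>b. ((s,a,s1),(s,b,s2)) \<in> indep M \<and> ((s,a,s1),(s1,b,q)) \<in> indep M
           \<and> ((s,b,s2),(s2,a,q)) \<in> indep M)}"

definition sim :: "('s,'a,'x) tsi_scheme \<Rightarrow> (('s,'a) trans \<times> ('s,'a) trans) set" where
  "sim M = (prec M \<union> (prec M)\<inverse>)\<^sup>*"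

definition is_system :: "('s,'a,'x) tsi_scheme \<Rightarrow> bool" where
  "is_system M \<longleftrightarrow>
     init M \<in> states M \<and>
     trans M \<subseteq> states M \<times> labels M \<times> states M \<and>
     indep M \<subseteq> trans M \<times> trans M \<and>
     irrefl (indep M) \<and> sym (indep M) \<and>
     (\<forall>s a s1 s2. ((s,a,s1),(s,a,s2)) \<in> sim M \<longrightarrow> s1 = s2) \<and>
     (\<forall>s a s1 b s2. ((s,a,s1),(s,b,s2)) \<in> indep M \<longrightarrow>
        (\<exists>q. ((s,a,s1),(s1,b,q)) \<in> indep M \<and> ((s,b,s2),(s2,a,q)) \<in> indep M)) \<and>
     (\<forall>s a s1 b q. ((s,a,s1),(s1,b,q)) \<in> indep M \<longrightarrow>
        (\<exists>s2. ((s,a,s1),(s,b,s2)) \<in> indep M \<and> ((s,b,s2),(s2,a,q)) \<in> indep M)) \<and>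
     (\<forall>t t'. (t,t') \<in> sim M \<longrightarrow> {u. (t,u) \<in> indep M} = {u. (t',u) \<in> indep M}) \<and>
     (\<forall>s a. finite {s'. (s,a,s') \<in> trans M})"

definition Xs :: "('s,'a,'x) tsi_scheme \<Rightarrow> 's \<Rightarrow> ('s,'a) trans set" where
  "Xs M s = {t \<in> trans M. src t = s}"

text \<open>Elements of the extended set A = T plus t_eps: None is t_eps, Some t is t.\<close>
fun leA :: "('s,'a,'x) tsi_scheme \<Rightarrow> ('s,'a) trans option \<Rightarrow> ('s,'a) trans \<Rightarrow> bool" where
  "leA M None r = (src r = init M)"
| "leA M (Some t) r = (tgt t = src r \<and> (t,r) \<notin> indep M)"

fun ominusA :: "('s,'a,'x) tsi_scheme \<Rightarrow> ('s,'a) trans option \<Rightarrow> ('s,'a) trans \<Rightarrow> bool" where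
  "ominusA M None r = False"
| "ominusA M (Some t) r = (tgt t = src r \<and> (t,r) \<in> indep M)"

datatype 'a form = TT | Neg "'a form" | Conj "'a form" "'a form"
  | DiaC 'a "'a form" | DiaNC 'a "'a form"

fun sat :: "('s,'a,'x) tsi_scheme \<Rightarrow> ('s,'a) trans set \<Rightarrow> ('s,'a) trans option \<Rightarrow> 'a form \<Rightarrow> bool" where
  "sat M R t TT = True"
| "sat M R t (Neg \<phi>) = (\<not> sat M R t \<phi>)"
| "sat M R t (Conj \<phi> \<psi>) = (sat M R t \<phi> \<and> sat M R t \<psi>)"
| "sat M R t (DiaC a \<phi>) = (\<exists>r\<in>R. lab r = a \<and> leA M t r \<and> sat M (Xs M (tgt r)) (Some r) \<phi>)"
| "sat M R t (DiaNC a \<phi>) = (\<exists>r\<in>R. lab r = a \<and> ominusA M t r \<and> sat M (Xs M (tgt r)) (Some r) \<phi>)"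

definition cmu_equiv :: "('s1,'a,'x1) tsi_scheme \<Rightarrow> ('s2,'a,'x2) tsi_scheme \<Rightarrow> bool" where
  "cmu_equiv M1 M2 \<longleftrightarrow>
     (\<forall>\<phi>. sat M1 (Xs M1 (init M1)) None \<phi> \<longleftrightarrow> sat M2 (Xs M2 (init M2)) None \<phi>)"

definition end_state :: "('s,'a,'x) tsi_scheme \<Rightarrow> ('s,'a) trans list \<Rightarrow> 's" where
  "end_state M \<pi> = (if \<pi> = [] then init M else tgt (last \<pi>))"

definition last_indep :: "('s,'a,'x) tsi_scheme \<Rightarrow> ('s,'a) trans list \<Rightarrow> ('s,'a) trans \<Rightarrow> bool" where
  "last_indep M \<pi> u = (\<pi> \<noteq> [] \<and> (last \<pi>, u) \<in> indep M)"

definition run_order :: "('s,'a,'x) tsi_scheme \<Rightarrow> ('s,'a) trans list \<Rightarrow> (nat \<times> nat) set" where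
  "run_order M \<pi> = {(i,j). i < j \<and> j < length \<pi> \<and> (\<pi>!i, \<pi>!j) \<notin> indep M}\<^sup>*"

definition poset_iso ::
  "('s1,'a,'x1) tsi_scheme \<Rightarrow> ('s1,'a) trans list \<Rightarrow> ('s2,'a,'x2) tsi_scheme \<Rightarrow> ('s2,'a) trans list \<Rightarrow> bool" where
  "poset_iso M1 \<pi>1 M2 \<pi>2 \<longleftrightarrow>
     (\<exists>f. bij_betw f {..<length \<pi>1} {..<length \<pi>2} \<and>
          (\<forall>i<length \<pi>1. lab (\<pi>2 ! f i) = lab (\<pi>1 ! i)) \<and>
          (\<forall>i<length \<pi>1. \<forall>j<length \<pi>1.
              (i,j) \<in> run_order M1 \<pi>1 \<longleftrightarrow> (f i, f j) \<in> run_order M2 \<pi>2))"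

definition synchronous ::
  "('s1,'a,'x1) tsi_scheme \<Rightarrow> ('s1,'a) trans list \<Rightarrow> ('s1,'a) trans \<Rightarrow>
   ('s2,'a,'x2) tsi_scheme \<Rightarrow> ('s2,'a) trans list \<Rightarrow> ('s2,'a) trans \<Rightarrow> bool" where
  "synchronous M1 \<pi>1 u M2 \<pi>2 v \<longleftrightarrow>
     (last_indep M1 \<pi>1 u \<longleftrightarrow> last_indep M2 \<pi>2 v) \<and>
     poset_iso M1 (\<pi>1 @ [u]) M2 (\<pi>2 @ [v])"

text \<open>A set of positions (pairs of runs) from which Eve can always answer Adam's move
  and stay in the set; Eve has a winning strategy from (eps,eps) iff such a set contains it.\<close>
definition hpb_invariant ::
  "('s1,'a,'x1) tsi_scheme \<Rightarrow> ('s2,'a,'x2) tsi_scheme \<Rightarrow>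
   (('s1,'a) trans list \<times> ('s2,'a) trans list) set \<Rightarrow> bool" where
  "hpb_invariant M1 M2 W \<longleftrightarrow>
     (\<forall>(\<pi>1,\<pi>2)\<in>W.
        (\<forall>u\<in>trans M1. src u = end_state M1 \<pi>1 \<longrightarrow>
           (\<exists>v\<in>trans M2. src v = end_state M2 \<pi>2 \<and> lab v = lab u \<and>
               synchronous M1 \<pi>1 u M2 \<pi>2 v \<and> (\<pi>1 @ [u], \<pi>2 @ [v]) \<in> W)) \<and>
        (\<forall>v\<in>trans M2. src v = end_state M2 \<pi>2 \<longrightarrow>
           (\<exists>u\<in>trans M1. src u = end_state M1 \<pi>1 \<and> lab u = lab v \<and>
               synchronous M1 \<pi>1 u M2 \<pi>2 v \<and> (\<pi>1 @ [u], \<pi>2 @ [v]) \<in> W)))"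

definition hpb_equiv :: "('s1,'a,'x1) tsi_scheme \<Rightarrow> ('s2,'a,'x2) tsi_scheme \<Rightarrow> bool" where
  "hpb_equiv M1 M2 \<longleftrightarrow> (\<exists>W. ([],[]) \<in> W \<and> hpb_invariant M1 M2 W)"

end

theory Submission
  imports Defs
begin

text \<open>A position of the hpb game, a pair of runs, induces in each system the process
  whose support set is the set of transitions leaving the end state of the run and whose
  transition is the last one of the run (\<open>t\<^sub>\<epsilon>\<close> for the empty run). Eve's answers are
  synchronous, so they preserve whether the new transition is causally dependent on or
  concurrent with the previous one; hence the two modalities are matched move by move,
  and induction on formulas shows that positions reachable under Eve's winning strategy
  induce processes satisfying the same formulas.\<close>

definition last_trans :: "'t list \<Rightarrow> 't option" where
  "last_trans p = (if p = [] then None else Some (last p))"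

lemma last_trans_Nil [simp]: "last_trans [] = None"
  by (simp add: last_trans_def)

lemma last_trans_snoc [simp]: "last_trans (p @ [r]) = Some r"
  by (simp add: last_trans_def)

lemma end_state_Nil [simp]: "end_state M [] = init M"
  by (simp add: end_state_def)

lemma end_state_snoc [simp]: "end_state M (p @ [r]) = tgt r"
  by (simp add: end_state_def)

lemma poset_iso_length_eq:
  assumes "poset_iso M1 p1 M2 p2"
  shows "length p1 = length p2"
proof -
  from assms obtain f where "bij_betw f {..<length p1} {..<length p2}"
    unfolding poset_iso_def by blast
  from bij_betw_same_card[OF this] show ?thesis by simp
qed

lemma synchronous_Nil_iff:
  assumes "synchronous M1 p1 u M2 p2 v"
  shows "p1 = [] \<longleftrightarrow> p2 = []"
  using poset_iso_length_eq[of M1 "p1 @ [u]" M2 "p2 @ [v]"] assms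
  unfolding synchronous_def by auto

lemma synchronous_leA_iff:
  assumes "synchronous M1 p1 u M2 p2 v"
    and "src u = end_state M1 p1" and "src v = end_state M2 p2"
  shows "leA M1 (last_trans p1) u \<longleftrightarrow> leA M2 (last_trans p2) v"
  using assms synchronous_Nil_iff[OF assms(1)]
  by (cases "p1 = []")
     (auto simp: synchronous_def last_trans_def end_state_def last_indep_def)

lemma synchronous_ominusA_iff:
  assumes "synchronous M1 p1 u M2 p2 v"
    and "src u = end_state M1 p1" and "src v = end_state M2 p2"
  shows "ominusA M1 (last_trans p1) u \<longleftrightarrow> ominusA M2 (last_trans p2) v"
  using assms synchronous_Nil_iff[OF assms(1)]
  by (cases "p1 = []")
     (auto simp: synchronous_def last_trans_def end_state_def last_indep_def)

lemma hpb_invariant_diamond_iff: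
  assumes W: "hpb_invariant M1 M2 W" "(p1, p2) \<in> W"
    and Q: "\<And>u v. synchronous M1 p1 u M2 p2 v \<Longrightarrow> src u = end_state M1 p1 \<Longrightarrow>
              src v = end_state M2 p2 \<Longrightarrow> Q1 u \<longleftrightarrow> Q2 v"
    and IH: "\<And>q1 q2. (q1, q2) \<in> W \<Longrightarrow>
              sat M1 (Xs M1 (end_state M1 q1)) (last_trans q1) \<phi> \<longleftrightarrow>
              sat M2 (Xs M2 (end_state M2 q2)) (last_trans q2) \<phi>"
  shows "(\<exists>r\<in>Xs M1 (end_state M1 p1). lab r = a \<and> Q1 r \<and> sat M1 (Xs M1 (tgt r)) (Some r) \<phi>) \<longleftrightarrow>
         (\<exists>r\<in>Xs M2 (end_state M2 p2). lab r = a \<and> Q2 r \<and> sat M2 (Xs M2 (tgt r)) (Some r) \<phi>)"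
proof
  assume "\<exists>u\<in>Xs M1 (end_state M1 p1). lab u = a \<and> Q1 u \<and> sat M1 (Xs M1 (tgt u)) (Some u) \<phi>"
  then obtain u where u: "u \<in> trans M1" "src u = end_state M1 p1" "lab u = a" "Q1 u"
      "sat M1 (Xs M1 (tgt u)) (Some u) \<phi>"
    by (auto simp: Xs_def)
  then obtain v where v: "v \<in> trans M2" "src v = end_state M2 p2" "lab v = lab u"
      "synchronous M1 p1 u M2 p2 v" "(p1 @ [u], p2 @ [v]) \<in> W"
    using W unfolding hpb_invariant_def by blast
  have "sat M2 (Xs M2 (tgt v)) (Some v) \<phi>"
    using IH[OF v(5)] u(5) by simp
  with u v Q[OF v(4) u(2) v(2)]
  show "\<exists>v\<in>Xs M2 (end_state M2 p2). lab v = a \<and> Q2 v \<and> sat M2 (Xs M2 (tgt v)) (Some v) \<phi>"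
    by (intro bexI[of _ v]) (auto simp: Xs_def)
next
  assume "\<exists>v\<in>Xs M2 (end_state M2 p2). lab v = a \<and> Q2 v \<and> sat M2 (Xs M2 (tgt v)) (Some v) \<phi>"
  then obtain v where v: "v \<in> trans M2" "src v = end_state M2 p2" "lab v = a" "Q2 v"
      "sat M2 (Xs M2 (tgt v)) (Some v) \<phi>"
    by (auto simp: Xs_def)
  then obtain u where u: "u \<in> trans M1" "src u = end_state M1 p1" "lab u = lab v"
      "synchronous M1 p1 u M2 p2 v" "(p1 @ [u], p2 @ [v]) \<in> W"
    using W unfolding hpb_invariant_def by blast
  have "sat M1 (Xs M1 (tgt u)) (Some u) \<phi>"
    using IH[OF u(5)] v(5) by simp
  with u v Q[OF u(4) u(2) v(2)]
  show "\<exists>u\<in>Xs M1 (end_state M1 p1). lab u = a \<and> Q1 u \<and> sat M1 (Xs M1 (tgt u)) (Some u) \<phi>"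
    by (intro bexI[of _ u]) (auto simp: Xs_def)
qed

lemma hpb_invariant_sat_iff:
  assumes "hpb_invariant M1 M2 W" "(p1, p2) \<in> W"
  shows "sat M1 (Xs M1 (end_state M1 p1)) (last_trans p1) \<phi> \<longleftrightarrow>
         sat M2 (Xs M2 (end_state M2 p2)) (last_trans p2) \<phi>"
  using assms(2)
proof (induction \<phi> arbitrary: p1 p2)
  case (DiaC a \<phi>)
  show ?case
    using hpb_invariant_diamond_iff[OF assms(1) DiaC.prems synchronous_leA_iff DiaC.IH]
    by simp
next
  case (DiaNC a \<phi>)
  show ?case
    using hpb_invariant_diamond_iff[OF assms(1) DiaNC.prems synchronous_ominusA_iff DiaNC.IH]
    by simp
qed simp_all

theorem lemma1:
  fixes M1 :: "('s1,'a) tsi" and M2 :: "('s2,'a) tsi"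
  assumes "is_system M1" and "is_system M2"
    and "hpb_equiv M1 M2"
  shows "cmu_equiv M1 M2"
proof -
  obtain W where "([], []) \<in> W" "hpb_invariant M1 M2 W"
    using assms(3) unfolding hpb_equiv_def by blast
  from hpb_invariant_sat_iff[OF this(2,1)] show ?thesis
    unfolding cmu_equiv_def by simp
qed

end
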